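(* Let $y\in\tilde W$ and $s\in\tilde{\mathbb S}$, and assume $s=s_H$ is the reflection in the affine root hyperplane $H=H_{\alpha,k}$ with $\alpha\in\Sigma$, $k\in\mathbb Z$. Let $\beta\in\Sigma$. (1) If $\beta\notin\{\pm\alpha,\pm\bar y\delta(\alpha)\}$, then $sy\delta(s)\mathbf a\geqslant_{\bar s(\beta)}\mathbf a$ if and only if $y\mathbf a\geqslant_\beta\mathbf a$. (2) If $\beta\neq\pm\bar y\delta(\alpha)$, then $y\mathbf a\geqslant_\beta\mathbf a$ if and only if $y\delta(s)\mathbf a\geqslant_\beta\mathbf a$.
   Context: Let $\tilde W=X_*(T)_\Gamma\rtimes W$ be the Iwahori–Weyl group of a quasi-split connected semisimple group $G$ over a local field $F$ (finite extension of $\mathbb Q_p$ or $\mathbb F_q((\epsilon))$) split over a tamely ramified extension, relative to a maximal $L$-split torus $S$ defined over $F$ with centralizer $T$, where $L$ is the completion of the maximal unramified extension of $F$ and $\Gamma=\mathrm{Gal}(\bar L/L)$. Let $\delta$ be the automorphism of $\tilde W$ induced by the Frobenius $\sigma$ of $L/F$; it also acts on $W$ and on the root system $\Sigma$ below. $V=X_*(T)_\Gamma\otimes\mathbb R$; $\Sigma$ is the reduced root system such that affine roots are $v\mapsto\langle a,v\rangle+k$, $a\in\Sigma,k\in\mathbb Z$; $H_{a,k}=\{v\in V:\langle a,v\rangle=k\}$; $W=W(\Sigma)$. $\mathbf a$ is a fixed $\sigma$-stable base alcove; $\tilde W$ acts on alcoves; $\tilde{\mathbb S}$ is the set of simple affine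 reflections (reflections in walls of $\mathbf a$). For $x\in\tilde W$, $\bar x$ denotes its image under the projection $\tilde W\to W$. For $a\in\Sigma$ and an alcove $\mathbf b$, $k(a,\mathbf b)$ is the unique integer $k$ such that $\mathbf b$ lies between $H_{a,k}$ and $H_{a,k-1}$; for alcoves $\mathbf b_1,\mathbf b_2$, $\mathbf b_1\geqslant_a\mathbf b_2$ means $k(a,\mathbf b_1)\ge k(a,\mathbf b_2)$. *)

theory Defs
  imports "HOL-Analysis.Analysis"
begin

text \<open>The real vector space V is modelled by a Euclidean space 'v; roots are
  identified with vectors via the (W- and Frobenius-invariant) inner product.\<close>

definition coroot :: "'v::euclidean_space \<Rightarrow> 'v" where
  "coroot a = (2 / (a \<bullet> a)) *\<^sub>R a"

definition refl :: "'v::euclidean_space \<Rightarrow> 'v \<Rightarrow> 'v" where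
  "refl a v = v - (v \<bullet> a) *\<^sub>R coroot a"

text \<open>Reduced root system spanning V (G semisimple).\<close>
definition root_system :: "'v::euclidean_space set \<Rightarrow> bool" where
  "root_system R \<longleftrightarrow> finite R \<and> 0 \<notin> R \<and> span R = UNIV \<and>
     (\<forall>a\<in>R. \<forall>b\<in>R. refl a b \<in> R \<and> (b \<bullet> coroot a) \<in> \<int>) \<and>
     (\<forall>a\<in>R. \<forall>c::real. c *\<^sub>R a \<in> R \<longrightarrow> c = 1 \<or> c = -1)"

inductive_set weyl :: "'v::euclidean_space set \<Rightarrow> ('v \<Rightarrow> 'v) set" for R where
  weyl_id: "id \<in> weyl R"
| weyl_step: "a \<in> R \<Longrightarrow> w \<in> weyl R \<Longrightarrow> refl a \<circ> w \<in> weyl R"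

definition hyp :: "'v::euclidean_space \<Rightarrow> int \<Rightarrow> 'v set" where
  "hyp a k = {v. a \<bullet> v = of_int k}"

text \<open>Alcoves: connected components of the complement of all H_{a,k}; since
  R is finite these are the nonempty sets cut out by a choice of strip for every root.\<close>
definition alcove :: "'v::euclidean_space set \<Rightarrow> 'v set \<Rightarrow> bool" where
  "alcove R B \<longleftrightarrow> B \<noteq> {} \<and>
     (\<exists>k::'v \<Rightarrow> int. B = {v. \<forall>a\<in>R. of_int (k a) - 1 < a \<bullet> v \<and> a \<bullet> v < of_int (k a)})"

definition kval :: "'v::euclidean_space \<Rightarrow> 'v set \<Rightarrow> int" where
  "kval a B = (THE k::int. B \<subseteq> {v. of_int k - 1 < a \<bullet> v \<and> a \<bullet> v < of_int k})"

definition alc_geq :: "'v::euclidean_space \<Rightarrow> 'v set \<Rightarrow> 'v set \<Rightarrow> bool" where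
  "alc_geq a B1 B2 \<longleftrightarrow> kval a B1 \<ge> kval a B2"

definition is_wall :: "'v::euclidean_space set \<Rightarrow> 'v set \<Rightarrow> 'v set \<Rightarrow> bool" where
  "is_wall R B H \<longleftrightarrow> (\<exists>a\<in>R. \<exists>k. H = hyp a k) \<and>
     aff_dim (closure B \<inter> H) = int DIM('v) - 1"

text \<open>Elements of the Iwahori-Weyl group X_*(T)_Gamma \<rtimes> W, via their image
  (t, w) in the affine group of V: v \<mapsto> w v + t, where t lies in the image L of X_*(T)_Gamma.\<close>
type_synonym 'v iw = "'v \<times> ('v \<Rightarrow> 'v)"

definition iw_act :: "'v::euclidean_space iw \<Rightarrow> 'v \<Rightarrow> 'v" where
  "iw_act x v = snd x v + fst x"

definition iw_mult :: "'v::euclidean_space iw \<Rightarrow> 'v iw \<Rightarrow> 'v iw" where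
  "iw_mult x y = (fst x + snd x (fst y), snd x \<circ> snd y)"

definition IW :: "'v::euclidean_space set \<Rightarrow> 'v set \<Rightarrow> 'v iw set" where
  "IW R L = {(t, w). t \<in> L \<and> w \<in> weyl R}"

definition iw_bar :: "'v::euclidean_space iw \<Rightarrow> 'v \<Rightarrow> 'v" where
  "iw_bar x = snd x"

definition aff_refl :: "'v::euclidean_space \<Rightarrow> int \<Rightarrow> 'v iw" where
  "aff_refl a k = (of_int k *\<^sub>R coroot a, refl a)"

definition iw_delta :: "('v::euclidean_space \<Rightarrow> 'v) \<Rightarrow> 'v iw \<Rightarrow> 'v iw" where
  "iw_delta \<sigma> x = (\<sigma> (fst x), \<sigma> \<circ> snd x \<circ> inv \<sigma>)"

text \<open>Standing data: root system R, translation lattice L (image of X_*(T)_Gamma),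
  Frobenius sigma, sigma-stable base alcove A.\<close>
definition iw_datum :: "'v::euclidean_space set \<Rightarrow> 'v set \<Rightarrow> ('v \<Rightarrow> 'v) \<Rightarrow> 'v set \<Rightarrow> bool" where
  "iw_datum R L \<sigma> A \<longleftrightarrow> root_system R \<and>
     0 \<in> L \<and> (\<forall>s\<in>L. \<forall>t\<in>L. s + t \<in> L \<and> - s \<in> L) \<and>
     (\<forall>w\<in>weyl R. w ` L \<subseteq> L) \<and> coroot ` R \<subseteq> L \<and>
     (\<forall>a\<in>R. \<forall>t\<in>L. a \<bullet> t \<in> \<int>) \<and>
     linear \<sigma> \<and> bij \<sigma> \<and> (\<forall>u v. \<sigma> u \<bullet> \<sigma> v = u \<bullet> v) \<and>
     \<sigma> ` R = R \<and> \<sigma> ` L = L \<and>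
     alcove R A \<and> \<sigma> ` A = A"

end

theory Submission imports Defs begin

text \<open>Write s = s_H and pull \<beta> back to the root \<delta> with \<beta> = ybar(\<sigma> \<delta>), where ybar is
  the linear part of y. Since \<sigma> fixes the base alcove A, the alcoves yA, y\<delta>(s)A and
  sy\<delta>(s)A are the images of A under v \<mapsto> y(\<sigma> v), v \<mapsto> y(\<sigma>(s v)) and
  v \<mapsto> s(y(\<sigma>(s v))). Paired with \<beta>, resp. s_\<alpha>(\<beta>), these are affine functions of v with
  linear part \<delta>, resp. s_\<alpha>(\<delta>), and integral constant term, so every k-value in the
  statement is a k-value of A shifted by an explicit integer.
  The geometric input is that for a root \<gamma> \<noteq> \<pm>\<alpha> the alcove A and its mirror image sA
  across the wall H lie in the same strip for \<gamma>: otherwise closure(A) \<inter> H would lie in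
  H \<inter> H_{\<gamma>,j} for some j, which has codimension 2. For \<gamma> = s_\<alpha>(\<delta>) this gives (2),
  and together with \<gamma> = s_\<alpha>(\<beta>) it gives (1).\<close>

lemma refl_inner_left: "refl a u \<bullet> v = u \<bullet> refl a v"
  unfolding refl_def coroot_def by (simp add: inner_diff_left inner_diff_right inner_commute)

lemma refl_refl: "a \<noteq> 0 \<Longrightarrow> refl a (refl a v) = v"
  unfolding refl_def coroot_def
  by (simp add: inner_diff_left inner_diff_right inner_commute algebra_simps)

lemma refl_inner_refl: "a \<noteq> 0 \<Longrightarrow> refl a u \<bullet> refl a v = u \<bullet> v"
  by (simp add: refl_inner_left refl_refl)

lemma refl_inner_coroot: "a \<noteq> 0 \<Longrightarrow> refl a b \<bullet> coroot a = - (b \<bullet> coroot a)"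
  unfolding refl_def coroot_def by (simp add: inner_diff_left inner_diff_right inner_commute field_simps)

lemma linear_refl: "linear (refl a)"
  unfolding refl_def coroot_def
  by (intro linearI) (simp_all add: inner_add_left add_divide_distrib scaleR_add_left algebra_simps)

lemma bij_refl: "a \<noteq> 0 \<Longrightarrow> bij (refl a)"
  by (metis bijI' refl_refl)

lemma root_system_nonzero: "root_system R \<Longrightarrow> a \<in> R \<Longrightarrow> a \<noteq> 0"
  unfolding root_system_def by auto

lemma root_system_refl_mem: "root_system R \<Longrightarrow> a \<in> R \<Longrightarrow> b \<in> R \<Longrightarrow> refl a b \<in> R"
  unfolding root_system_def by auto

lemma root_system_coroot_int:
  assumes "root_system R" "a \<in> R" "b \<in> R"
  obtains n :: int where "b \<bullet> coroot a = of_int n"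
  using assms unfolding root_system_def by (metis Ints_cases)

lemma root_system_refl_image: assumes "root_system R" "a \<in> R" shows "refl a ` R = R"
proof
  show "refl a ` R \<subseteq> R" using assms root_system_refl_mem by blast
  show "R \<subseteq> refl a ` R"
    using assms root_system_refl_mem refl_refl[OF root_system_nonzero[OF assms]] by (metis image_eqI subsetI)
qed

lemma weyl_linear: "w \<in> weyl R \<Longrightarrow> linear w"
  by (induct rule: weyl.induct) (blast intro: linear_id linear_compose linear_refl)+

lemma weyl_inner: assumes "root_system R" "w \<in> weyl R" shows "w u \<bullet> w v = u \<bullet> v"
  using assms(2) by induct (auto simp: refl_inner_refl root_system_nonzero[OF assms(1)])

lemma weyl_bij: assumes "root_system R" "w \<in> weyl R" shows "bij w"
  using assms(2)
proof induct
  case (weyl_step a w)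
  then show ?case using bij_comp bij_refl root_system_nonzero[OF assms(1)] by blast
qed (rule bij_id)

lemma weyl_image_roots: assumes "root_system R" "w \<in> weyl R" shows "w ` R = R"
  using assms(2)
proof induct
  case (weyl_step a w)
  then show ?case by (simp only: image_comp[symmetric] root_system_refl_image[OF assms(1)])
qed simp

lemma inner_inv_isometry:
  assumes "bij g" "\<And>u v. g u \<bullet> g v = u \<bullet> v"
  shows "b \<bullet> g u = inv g b \<bullet> u"
  by (metis assms bij_inv_eq_iff)

lemma inv_mem_of_image_eq:
  assumes "bij g" "g ` R = R" "b \<in> R"
  shows "inv g b \<in> R"
  by (metis assms bij_is_inj image_iff inv_f_f)

lemma kval_eqI:
  assumes "B \<noteq> {}" and strip: "\<And>v. v \<in> B \<Longrightarrow> of_int K - 1 < b \<bullet> v \<and> b \<bullet> v < of_int K"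
  shows "kval b B = K"
  unfolding kval_def
proof (rule the_equality)
  show "B \<subseteq> {v. of_int K - 1 < b \<bullet> v \<and> b \<bullet> v < of_int K}" using strip by auto
next
  fix K' assume K': "B \<subseteq> {v. of_int K' - 1 < b \<bullet> v \<and> b \<bullet> v < of_int K'}"
  obtain v where v: "v \<in> B" using assms(1) by auto
  then have "of_int K' < (of_int (K + 1) :: real)" "of_int K < (of_int (K' + 1) :: real)"
    using K' strip[OF v] by auto
  then show "K' = K" by linarith
qed

lemma kval_alcove_strip:
  assumes "alcove R A" "a \<in> R" "v \<in> A"
  shows "of_int (kval a A) - 1 < a \<bullet> v \<and> a \<bullet> v < of_int (kval a A)"
proof -
  obtain kA where A: "A \<noteq> {}" "A = {v. \<forall>a\<in>R. of_int (kA a) - 1 < a \<bullet> v \<and> a \<bullet> v < of_int (kA a)}"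
    using assms(1) unfolding alcove_def by auto
  then have "kval a A = kA a" using assms(2) by (intro kval_eqI) auto
  then show ?thesis using A assms(2,3) by auto
qed

lemma kval_image_alcove:
  assumes A: "alcove R A" and d: "d \<in> R" and gA: "g ` A = A"
    and pair: "\<And>v. v \<in> A \<Longrightarrow> b \<bullet> f (g v) = d \<bullet> v + of_int c"
  shows "kval b (f ` A) = kval d A + c"
proof (rule kval_eqI)
  show "f ` A \<noteq> {}" using A unfolding alcove_def by auto
  have "f ` A = (\<lambda>v. f (g v)) ` A" by (subst (1) gA[symmetric]) (simp add: image_image)
  then show "u \<in> f ` A \<Longrightarrow> of_int (kval d A + c) - 1 < b \<bullet> u \<and> b \<bullet> u < of_int (kval d A + c)" for u
    using kval_alcove_strip[OF A d] pair by auto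
qed

lemma hyperplane_subset_hyperplane_parallel:
  fixes a d :: "'v::euclidean_space"
  assumes a0: "a \<noteq> 0" and sub: "{v. a \<bullet> v = r} \<subseteq> {v. d \<bullet> v = q}"
  shows "d = ((d \<bullet> a) / (a \<bullet> a)) *\<^sub>R a"
proof -
  define p where "p = (r / (a \<bullet> a)) *\<^sub>R a"
  define u where "u = d - ((d \<bullet> a) / (a \<bullet> a)) *\<^sub>R a"
  have aa: "a \<bullet> a \<noteq> 0" using a0 by simp
  have au: "a \<bullet> u = 0" using aa unfolding u_def by (simp add: inner_diff_right inner_commute)
  have "a \<bullet> p = r" "a \<bullet> (p + u) = r" using aa au unfolding p_def by (simp_all add: inner_add_right)
  then have "d \<bullet> p = q" "d \<bullet> (p + u) = q" using sub by auto
  then have "d \<bullet> u = 0" by (simp add: inner_add_right)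
  then have "u \<bullet> u = 0" using au unfolding u_def by (simp add: inner_diff_left)
  then show ?thesis unfolding u_def by simp
qed

lemma aff_dim_hyperplane_Int_hyperplane_le:
  fixes a d :: "'v::euclidean_space"
  assumes a0: "a \<noteq> 0" and nonparallel: "\<And>c. d \<noteq> c *\<^sub>R a"
  shows "aff_dim ({v. a \<bullet> v = r} \<inter> {v. d \<bullet> v = q}) \<le> int DIM('v) - 2"
proof (cases "{v. a \<bullet> v = r} \<inter> {v. d \<bullet> v = q} = {}")
  case True
  then show ?thesis using DIM_positive[where 'a='v] by simp
next
  case False
  have "\<not> {v. a \<bullet> v = r} \<subseteq> {v. d \<bullet> v = q}"
    using hyperplane_subset_hyperplane_parallel[OF a0] nonparallel by blast
  then have "aff_dim ({v. a \<bullet> v = r} \<inter> {v. d \<bullet> v = q}) = aff_dim {v. a \<bullet> v = r} - 1"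
    using aff_dim_affine_Int_hyperplane[OF affine_hyperplane[of a r], of d q] False by auto
  then show ?thesis using aff_dim_hyperplane[OF a0] by simp
qed

lemma closed_unit_strips_Int:
  fixes x :: real
  assumes "of_int K - 1 \<le> x" "x \<le> of_int K" "of_int K' - 1 \<le> x" "x \<le> of_int K'" "K \<noteq> K'"
  shows "x = of_int (min K K')"
proof -
  have "K + 1 \<le> K' \<or> K' + 1 \<le> K" using assms(5) by linarith
  then have "of_int K + 1 \<le> (of_int K' :: real) \<or> of_int K' + 1 \<le> (of_int K :: real)"
    by (metis of_int_1 of_int_add of_int_le_iff)
  then show ?thesis using assms(1-4) by (auto simp: min_def)
qed

lemma kval_refl_across_wall:
  fixes \<alpha> \<delta> :: "'v::euclidean_space"
  assumes rs: "root_system R" and A: "alcove R A" and \<alpha>: "\<alpha> \<in> R" and wall: "is_wall R A (hyp \<alpha> k)"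
    and \<delta>: "\<delta> \<in> R" "\<delta> \<noteq> \<alpha>" "\<delta> \<noteq> - \<alpha>" and m: "\<delta> \<bullet> coroot \<alpha> = of_int m"
  shows "kval (refl \<alpha> \<delta>) A + k * m = kval \<delta> A"
proof (rule ccontr)
  assume neq: "kval (refl \<alpha> \<delta>) A + k * m \<noteq> kval \<delta> A"
  define e where "e = refl \<alpha> \<delta>"
  define K where "K = kval \<delta> A"
  define K' where "K' = kval e A + k * m"
  have eR: "e \<in> R" unfolding e_def using rs \<alpha> \<delta>(1) by (rule root_system_refl_mem)
  have e_inner: "e \<bullet> v = \<delta> \<bullet> v - (\<alpha> \<bullet> v) * of_int m" for v
    unfolding e_def refl_inner_left using m by (simp add: refl_def inner_diff_right inner_commute)
  define C where "C = {v. of_int K - 1 \<le> \<delta> \<bullet> v} \<inter> {v. \<delta> \<bullet> v \<le> of_int K}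
     \<inter> {v. of_int (kval e A) - 1 \<le> e \<bullet> v} \<inter> {v. e \<bullet> v \<le> of_int (kval e A)}"
  have "closed C" unfolding C_def by (intro closed_Int closed_halfspace_le closed_halfspace_ge)
  moreover have "A \<subseteq> C"
    unfolding C_def K_def using kval_alcove_strip[OF A \<delta>(1)] kval_alcove_strip[OF A eR] by (auto intro: less_imp_le)
  ultimately have clC: "closure A \<subseteq> C" by (rule closure_minimal[rotated])
  have "closure A \<inter> hyp \<alpha> k \<subseteq> {v. \<alpha> \<bullet> v = of_int k} \<inter> {v. \<delta> \<bullet> v = of_int (min K K')}"
  proof
    fix p assume "p \<in> closure A \<inter> hyp \<alpha> k"
    then have pC: "p \<in> C" and ap: "\<alpha> \<bullet> p = of_int k" using clC unfolding hyp_def by auto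
    then have "e \<bullet> p = \<delta> \<bullet> p - of_int k * of_int m" using e_inner[of p] by simp
    then have "of_int K' - 1 \<le> \<delta> \<bullet> p" "\<delta> \<bullet> p \<le> of_int K'" using pC unfolding C_def K'_def by auto
    moreover have "of_int K - 1 \<le> \<delta> \<bullet> p" "\<delta> \<bullet> p \<le> of_int K" using pC unfolding C_def by auto
    moreover have "K \<noteq> K'" using neq unfolding K_def K'_def e_def by auto
    ultimately show "p \<in> {v. \<alpha> \<bullet> v = of_int k} \<inter> {v. \<delta> \<bullet> v = of_int (min K K')}"
      using ap closed_unit_strips_Int by auto
  qed
  moreover have "\<delta> \<noteq> c *\<^sub>R \<alpha>" for c
    using rs \<alpha> \<delta> unfolding root_system_def by (metis scaleR_minus1_left scaleR_one)
  ultimately have "aff_dim (closure A \<inter> hyp \<alpha> k) \<le> int DIM('v) - 2"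
    using aff_dim_subset aff_dim_hyperplane_Int_hyperplane_le[OF root_system_nonzero[OF rs \<alpha>]]
    by (meson order_trans)
  then show False using wall unfolding is_wall_def by simp
qed

lemma IW_linear: "y \<in> IW R L \<Longrightarrow> linear (snd y)"
  unfolding IW_def by (auto intro: weyl_linear)

lemma iw_act_mult: "linear (snd x) \<Longrightarrow> iw_act (iw_mult x z) v = iw_act x (iw_act z v)"
  unfolding iw_act_def iw_mult_def by (simp add: linear_add)

lemma iw_act_delta:
  "linear \<sigma> \<Longrightarrow> inj \<sigma> \<Longrightarrow> iw_act (iw_delta \<sigma> x) (\<sigma> v) = \<sigma> (iw_act x v)"
  unfolding iw_act_def iw_delta_def by (simp add: inv_f_f linear_add)

lemma inner_iw_act_aff_refl:
  "b \<bullet> iw_act (aff_refl \<alpha> k) v = refl \<alpha> b \<bullet> v + of_int k * (b \<bullet> coroot \<alpha>)"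
  unfolding iw_act_def aff_refl_def by (simp add: inner_add_right refl_inner_left)

lemma iw_mult_assoc: "linear (snd x) \<Longrightarrow> iw_mult (iw_mult x y) z = iw_mult x (iw_mult y z)"
  unfolding iw_mult_def by (simp add: linear_add comp_assoc)

lemma iw_bar_aff_refl: "iw_bar (aff_refl \<alpha> k) = refl \<alpha>"
  unfolding iw_bar_def aff_refl_def by simp

lemma linear_snd_aff_refl: "linear (snd (aff_refl \<alpha> k))"
  unfolding aff_refl_def by (simp add: linear_refl)

lemma inner_iw_act_mult_delta_aff_refl:
  assumes "linear (snd y)" "linear \<sigma>" "inj \<sigma>"
    and y_inner: "\<And>u. \<beta> \<bullet> iw_act y (\<sigma> u) = \<delta> \<bullet> u + of_int c" and m: "\<delta> \<bullet> coroot \<alpha> = of_int m"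
  shows "\<beta> \<bullet> iw_act (iw_mult y (iw_delta \<sigma> (aff_refl \<alpha> k))) (\<sigma> u) = refl \<alpha> \<delta> \<bullet> u + of_int (c + k * m)"
  using assms(1-3) by (simp add: iw_act_mult iw_act_delta y_inner inner_iw_act_aff_refl m)

lemma inner_refl_iw_act_aff_refl_mult:
  assumes "\<alpha> \<noteq> 0" "\<beta> \<bullet> coroot \<alpha> = of_int n"
  shows "refl \<alpha> \<beta> \<bullet> iw_act (iw_mult (aff_refl \<alpha> k) x) v = \<beta> \<bullet> iw_act x v - of_int (k * n)"
  using assms by (simp add: iw_act_mult[OF linear_snd_aff_refl] inner_iw_act_aff_refl refl_refl refl_inner_coroot)

lemma iw_pullback_root:
  assumes datum: "iw_datum R L \<sigma> A" and y: "y \<in> IW R L" and \<beta>: "\<beta> \<in> R"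
  obtains \<delta> c where "\<delta> \<in> R" "\<beta> = iw_bar y (\<sigma> \<delta>)" "\<And>u. \<beta> \<bullet> iw_act y (\<sigma> u) = \<delta> \<bullet> u + of_int c"
proof -
  have rs: "root_system R" and bij\<sigma>: "bij \<sigma>" and inner\<sigma>: "\<And>u v. \<sigma> u \<bullet> \<sigma> v = u \<bullet> v"
    and \<sigma>R: "\<sigma> ` R = R" and intL: "\<forall>a\<in>R. \<forall>t\<in>L. a \<bullet> t \<in> \<int>"
    using datum unfolding iw_datum_def by auto
  obtain t w where y_eq: "y = (t, w)" and t: "t \<in> L" and w: "w \<in> weyl R"
    using y unfolding IW_def by auto
  define \<delta> where "\<delta> = inv \<sigma> (inv w \<beta>)"
  have "inv w \<beta> \<in> R"
    using inv_mem_of_image_eq[OF weyl_bij[OF rs w] weyl_image_roots[OF rs w] \<beta>] .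
  then have \<delta>R: "\<delta> \<in> R" unfolding \<delta>_def by (rule inv_mem_of_image_eq[OF bij\<sigma> \<sigma>R])
  obtain c where c: "\<beta> \<bullet> t = of_int c" using intL \<beta> t by (metis Ints_cases)
  have "\<beta> \<bullet> iw_act y (\<sigma> u) = \<delta> \<bullet> u + of_int c" for u
  proof -
    have "\<beta> \<bullet> iw_act y (\<sigma> u) = \<beta> \<bullet> w (\<sigma> u) + \<beta> \<bullet> t"
      unfolding iw_act_def y_eq by (simp add: inner_add_right)
    also have "\<beta> \<bullet> w (\<sigma> u) = inv w \<beta> \<bullet> \<sigma> u"
      by (rule inner_inv_isometry[OF weyl_bij[OF rs w] weyl_inner[OF rs w]])
    also have "\<dots> = \<delta> \<bullet> u" unfolding \<delta>_def by (rule inner_inv_isometry[OF bij\<sigma> inner\<sigma>])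
    finally show ?thesis using c by simp
  qed
  moreover have "\<beta> = iw_bar y (\<sigma> \<delta>)"
    unfolding iw_bar_def y_eq \<delta>_def using bij\<sigma> weyl_bij[OF rs w] by (simp add: bij_is_surj surj_f_inv_f)
  ultimately show thesis using that \<delta>R by blast
qed

theorem lemma4p4p2:
  fixes R L A :: "'v::euclidean_space set" and \<sigma> :: "'v \<Rightarrow> 'v"
    and y :: "'v iw" and \<alpha> \<beta> :: 'v and k :: int
  assumes datum: "iw_datum R L \<sigma> A"
    and y: "y \<in> IW R L"
    and \<alpha>: "\<alpha> \<in> R" and wall: "is_wall R A (hyp \<alpha> k)"
    and \<beta>: "\<beta> \<in> R"
  shows "(\<beta> \<notin> {\<alpha>, - \<alpha>, iw_bar y (\<sigma> \<alpha>), - iw_bar y (\<sigma> \<alpha>)} \<longrightarrow>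
           (alc_geq (iw_bar (aff_refl \<alpha> k) \<beta>)
              (iw_act (iw_mult (iw_mult (aff_refl \<alpha> k) y) (iw_delta \<sigma> (aff_refl \<alpha> k))) ` A) A
            \<longleftrightarrow> alc_geq \<beta> (iw_act y ` A) A))
       \<and> (\<beta> \<notin> {iw_bar y (\<sigma> \<alpha>), - iw_bar y (\<sigma> \<alpha>)} \<longrightarrow>
           (alc_geq \<beta> (iw_act y ` A) A
            \<longleftrightarrow> alc_geq \<beta> (iw_act (iw_mult y (iw_delta \<sigma> (aff_refl \<alpha> k))) ` A) A))"
proof -
  have rs: "root_system R" and A: "alcove R A" and \<sigma>A: "\<sigma> ` A = A"
    and lin\<sigma>: "linear \<sigma>" and inj\<sigma>: "inj \<sigma>"
    using datum unfolding iw_datum_def by (auto simp: bij_is_inj)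
  obtain \<delta> c where \<delta>: "\<delta> \<in> R" and \<beta>_eq: "\<beta> = iw_bar y (\<sigma> \<delta>)"
    and y_inner: "\<And>u. \<beta> \<bullet> iw_act y (\<sigma> u) = \<delta> \<bullet> u + of_int c"
    using iw_pullback_root[OF datum y \<beta>] by blast
  obtain m where m: "\<delta> \<bullet> coroot \<alpha> = of_int m" using root_system_coroot_int[OF rs \<alpha> \<delta>] .
  obtain n where n: "\<beta> \<bullet> coroot \<alpha> = of_int n" using root_system_coroot_int[OF rs \<alpha> \<beta>] .
  note ys_inner = inner_iw_act_mult_delta_aff_refl[OF IW_linear[OF y] lin\<sigma> inj\<sigma> y_inner m]
  note s_inner = inner_refl_iw_act_aff_refl_mult[OF root_system_nonzero[OF rs \<alpha>] n]
  note kval_image = kval_image_alcove[OF A _ \<sigma>A]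
  have K1: "kval \<beta> (iw_act y ` A) = kval \<delta> A + c"
    using kval_image[OF \<delta>] y_inner by blast
  have K2: "kval \<beta> (iw_act (iw_mult y (iw_delta \<sigma> (aff_refl \<alpha> k))) ` A) = kval (refl \<alpha> \<delta>) A + (c + k * m)"
    using kval_image[OF root_system_refl_mem[OF rs \<alpha> \<delta>]] ys_inner by blast
  have K3: "kval (refl \<alpha> \<beta>) (iw_act (iw_mult (iw_mult (aff_refl \<alpha> k) y) (iw_delta \<sigma> (aff_refl \<alpha> k))) ` A)
      = kval (refl \<alpha> \<delta>) A + (c + k * m - k * n)"
    unfolding iw_mult_assoc[OF linear_snd_aff_refl]
    by (rule kval_image[OF root_system_refl_mem[OF rs \<alpha> \<delta>]]) (simp add: s_inner ys_inner)
  have "\<delta> \<noteq> \<alpha> \<and> \<delta> \<noteq> - \<alpha>" if "\<beta> \<notin> {iw_bar y (\<sigma> \<alpha>), - iw_bar y (\<sigma> \<alpha>)}"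
    using that \<beta>_eq linear_neg[OF IW_linear[OF y]] linear_neg[OF lin\<sigma>] by (auto simp: iw_bar_def)
  then have "kval (refl \<alpha> \<delta>) A + k * m = kval \<delta> A" if "\<beta> \<notin> {iw_bar y (\<sigma> \<alpha>), - iw_bar y (\<sigma> \<alpha>)}"
    using kval_refl_across_wall[OF rs A \<alpha> wall \<delta> _ _ m] that by blast
  moreover have "kval (refl \<alpha> \<beta>) A + k * n = kval \<beta> A" if "\<beta> \<noteq> \<alpha>" "\<beta> \<noteq> - \<alpha>"
    using kval_refl_across_wall[OF rs A \<alpha> wall \<beta> that n] .
  ultimately show ?thesis
    unfolding alc_geq_def iw_bar_aff_refl K1 K2 K3 by (auto simp: iw_bar_def)
qed

end
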